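(* Let $T:V\to\mathfrak g$ be a relative Rota-Baxter operator on a Lie-Yamaguti algebra $(\mathfrak g,[\cdot,\cdot],[\![\cdot,\cdot,\cdot]\!])$ with respect to a representation $(V;\rho,\mu)$, and let $(V,*,\{\cdot,\cdot,\cdot\})$ be the pre-Lie-Yamaguti algebra with $u*v=\rho(Tu)v$, $\{u,v,w\}=\mu(Tv,Tw)u$. Then $T$ is a homomorphism of Lie-Yamaguti algebras from $(V,[\cdot,\cdot]_C,[\![\cdot,\cdot,\cdot]\!]_C)$ to $(\mathfrak g,[\cdot,\cdot],[\![\cdot,\cdot,\cdot]\!])$, where $[u,v]_C=\rho(Tu)v-\rho(Tv)u$ and $[\![u,v,w]\!]_C=D_{\rho,\mu}(Tu,Tv)w+\mu(Tv,Tw)u-\mu(Tu,Tw)v$. Furthermore, $T(V)$ is a Lie-Yamaguti subalgebra of $\mathfrak g$ and there is an induced pre-Lie-Yamaguti algebra structure on $T(V)$ given by $Tu*Tv=T(u*v)$ and $\{Tu,Tv,Tw\}=T\{u,v,w\}$ for $u,v,w\in V$.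
   Context: All vector spaces are over a field of characteristic $0$. A Lie-Yamaguti algebra is a vector space $\mathfrak g$ with a bilinear skew-symmetric $[\cdot,\cdot]$ and a trilinear $[\![\cdot,\cdot,\cdot]\!]$ skew-symmetric in its first two arguments such that for all $x,y,z,w,t$: (1) $[[x,y],z]+[[y,z],x]+[[z,x],y]+[\![x,y,z]\!]+[\![y,z,x]\!]+[\![z,x,y]\!]=0$; (2) $[\![[x,y],z,w]\!]+[\![[y,z],x,w]\!]+[\![[z,x],y,w]\!]=0$; (3) $[\![x,y,[z,w]]\!]=[[\![x,y,z]\!],w]+[z,[\![x,y,w]\!]]$; (4) $[\![x,y,[\![z,w,t]\!]]\!]=[\![[\![x,y,z]\!],w,t]\!]+[\![z,[\![x,y,w]\!],t]\!]+[\![z,w,[\![x,y,t]\!]]\!]$. A homomorphism of Lie-Yamaguti algebras is a linear map preserving both brackets. A representation $(V;\rho,\mu)$ of $\mathfrak g$ is a linear $\rho:\mathfrak g\to\mathfrak{gl}(V)$ and bilinear $\mu:\otimes^2\mathfrak g\to\mathfrak{gl}(V)$ such that, with $D_{\rho,\mu}(x,y):=\mu(y,x)-\mu(x,y)+[\rho(x),\rho(y)]-\rho([x,y])$: $\mu([x,y],z)-\mu(x,z)\rho(y)+\mu(y,z)\rho(x)=0$; $\mu(x,[y,z])-\rho(y)\mu(x,z)+\rho(z)\mu(x,y)=0$; $\rho([\![x,y,z]\!])=[D_{\rho,\mu}(x,y),\rho(z)]$; $\mu(z,w)\mu(x,y)-\mu(y,w)\mu(x,z)-\mu(x,[\![y,z,w]\!])+D_{\rho,\mu}(y,z)\mu(x,w)=0$;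 $\mu([\![x,y,z]\!],w)+\mu(z,[\![x,y,w]\!])=[D_{\rho,\mu}(x,y),\mu(z,w)]$. A relative Rota-Baxter operator on $\mathfrak g$ with respect to $(V;\rho,\mu)$ is a linear map $T:V\to\mathfrak g$ with $[Tu,Tv]=T(\rho(Tu)v-\rho(Tv)u)$ and $[\![Tu,Tv,Tw]\!]=T(D_{\rho,\mu}(Tu,Tv)w+\mu(Tv,Tw)u-\mu(Tu,Tw)v)$ for all $u,v,w\in V$. A pre-Lie-Yamaguti algebra is a vector space $A$ with a bilinear operation $*$ and a trilinear operation $\{\cdot,\cdot,\cdot\}$ such that, writing $[x,y]_C=x*y-y*x$, $(x,y,z)=(x*y)*z-x*(y*z)$ and $\{x,y,z\}_D=\{z,y,x\}-\{z,x,y\}+(y,x,z)-(x,y,z)$, for all $x,y,z,w,t\in A$: (P1) $\{z,[x,y]_C,w\}-\{y*z,x,w\}+\{x*z,y,w\}=0$; (P2) $\{x,y,[z,w]_C\}=z*\{x,y,w\}-w*\{x,y,z\}$; (P3) $\{\{x,y,z\},w,t\}-\{\{x,y,w\},z,t\}-\{x,y,\{z,w,t\}_D\}-\{x,y,\{z,w,t\}\}+\{x,y,\{w,z,t\}\}+\{z,w,\{x,y,t\}\}_D=0$; (P4) $\{z,\{x,y,w\}_D,t\}+\{z,\{x,y,w\},t\}-\{z,\{y,x,w\},t\}+\{z,w,\{x,y,t\}_D\}+\{z,w,\{x,y,t\}\}-\{z,w,\{y,x,t\}\}=\{x,y,\{z,w,t\}\}_D-\{\{x,y,z\}_D,w,t\}$;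 (P5) $\{x,y,z\}_D*w+\{x,y,z\}*w-\{y,x,z\}*w=\{x,y,z*w\}_D-z*\{x,y,w\}_D$. Its subadjacent Lie-Yamaguti algebra has brackets $[x,y]_C$ and $[\![x,y,z]\!]_C=\{x,y,z\}_D+\{x,y,z\}-\{y,x,z\}$. *)

theory Defs
  imports Main "HOL.Vector_Spaces"
begin

text \<open>Structures are relativised
to a carrier S (a subspace), so that the same notions apply to subalgebras.\<close>

definition subspace_in :: "('k::field \<Rightarrow> 'v::ab_group_add \<Rightarrow> 'v) \<Rightarrow> 'v set \<Rightarrow> bool" where
  "subspace_in s S \<longleftrightarrow> 0 \<in> S \<and> (\<forall>x\<in>S. \<forall>y\<in>S. x + y \<in> S) \<and> (\<forall>c. \<forall>x\<in>S. s c x \<in> S)"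

definition bilinear_on :: "('k::field \<Rightarrow> 'v::ab_group_add \<Rightarrow> 'v) \<Rightarrow> 'v set \<Rightarrow> ('v \<Rightarrow> 'v \<Rightarrow> 'v) \<Rightarrow> bool" where
  "bilinear_on s S b \<longleftrightarrow>
     (\<forall>a. \<forall>x\<in>S. \<forall>y\<in>S. \<forall>z\<in>S.
        b (s a x + y) z = s a (b x z) + b y z \<and>
        b z (s a x + y) = s a (b z x) + b z y)"

definition trilinear_on :: "('k::field \<Rightarrow> 'v::ab_group_add \<Rightarrow> 'v) \<Rightarrow> 'v set \<Rightarrow> ('v \<Rightarrow> 'v \<Rightarrow> 'v \<Rightarrow> 'v) \<Rightarrow> bool" where
  "trilinear_on s S t \<longleftrightarrow>
     (\<forall>a. \<forall>x\<in>S. \<forall>y\<in>S. \<forall>z\<in>S. \<forall>w\<in>S.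
        t (s a x + y) z w = s a (t x z w) + t y z w \<and>
        t z (s a x + y) w = s a (t z x w) + t z y w \<and>
        t z w (s a x + y) = s a (t z w x) + t z w y)"

definition LY_on :: "('k::field \<Rightarrow> 'g::ab_group_add \<Rightarrow> 'g) \<Rightarrow> 'g set \<Rightarrow> ('g \<Rightarrow> 'g \<Rightarrow> 'g) \<Rightarrow> ('g \<Rightarrow> 'g \<Rightarrow> 'g \<Rightarrow> 'g) \<Rightarrow> bool" where
  "LY_on s S br tr \<longleftrightarrow>
     vector_space s \<and> subspace_in s S \<and>
     (\<forall>x\<in>S. \<forall>y\<in>S. br x y \<in> S) \<and> (\<forall>x\<in>S. \<forall>y\<in>S. \<forall>z\<in>S. tr x y z \<in> S) \<and>
     bilinear_on s S br \<and> trilinear_on s S tr \<and>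
     (\<forall>x\<in>S. \<forall>y\<in>S. br x y = - br y x) \<and>
     (\<forall>x\<in>S. \<forall>y\<in>S. \<forall>z\<in>S. tr x y z = - tr y x z) \<and>
     (\<forall>x\<in>S. \<forall>y\<in>S. \<forall>z\<in>S.
        br (br x y) z + br (br y z) x + br (br z x) y + tr x y z + tr y z x + tr z x y = 0) \<and>
     (\<forall>x\<in>S. \<forall>y\<in>S. \<forall>z\<in>S. \<forall>w\<in>S.
        tr (br x y) z w + tr (br y z) x w + tr (br z x) y w = 0) \<and>
     (\<forall>x\<in>S. \<forall>y\<in>S. \<forall>z\<in>S. \<forall>w\<in>S.
        tr x y (br z w) = br (tr x y z) w + br z (tr x y w)) \<and>
     (\<forall>x\<in>S. \<forall>y\<in>S. \<forall>z\<in>S. \<forall>w\<in>S. \<forall>t\<in>S.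
        tr x y (tr z w t) = tr (tr x y z) w t + tr z (tr x y w) t + tr z w (tr x y t))"

definition LY_hom_on :: "('k::field \<Rightarrow> 'v::ab_group_add \<Rightarrow> 'v) \<Rightarrow> ('k \<Rightarrow> 'g::ab_group_add \<Rightarrow> 'g) \<Rightarrow> 'v set \<Rightarrow>
    ('v \<Rightarrow> 'v \<Rightarrow> 'v) \<Rightarrow> ('v \<Rightarrow> 'v \<Rightarrow> 'v \<Rightarrow> 'v) \<Rightarrow>
    ('g \<Rightarrow> 'g \<Rightarrow> 'g) \<Rightarrow> ('g \<Rightarrow> 'g \<Rightarrow> 'g \<Rightarrow> 'g) \<Rightarrow> ('v \<Rightarrow> 'g) \<Rightarrow> bool" where
  "LY_hom_on s1 s2 S br1 tr1 br2 tr2 f \<longleftrightarrow>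
     (\<forall>a. \<forall>x\<in>S. \<forall>y\<in>S. f (s1 a x + y) = s2 a (f x) + f y) \<and>
     (\<forall>x\<in>S. \<forall>y\<in>S. f (br1 x y) = br2 (f x) (f y)) \<and>
     (\<forall>x\<in>S. \<forall>y\<in>S. \<forall>z\<in>S. f (tr1 x y z) = tr2 (f x) (f y) (f z))"

definition LY_subalgebra :: "('k::field \<Rightarrow> 'g::ab_group_add \<Rightarrow> 'g) \<Rightarrow> ('g \<Rightarrow> 'g \<Rightarrow> 'g) \<Rightarrow> ('g \<Rightarrow> 'g \<Rightarrow> 'g \<Rightarrow> 'g) \<Rightarrow> 'g set \<Rightarrow> bool" where
  "LY_subalgebra s br tr H \<longleftrightarrow>
     subspace_in s H \<and>
     (\<forall>x\<in>H. \<forall>y\<in>H. br x y \<in> H) \<and> (\<forall>x\<in>H. \<forall>y\<in>H. \<forall>z\<in>H. tr x y z \<in> H)"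

definition Dop :: "('g \<Rightarrow> 'g \<Rightarrow> 'g) \<Rightarrow> ('g \<Rightarrow> 'v \<Rightarrow> 'v) \<Rightarrow> ('g \<Rightarrow> 'g \<Rightarrow> 'v \<Rightarrow> 'v) \<Rightarrow> 'g \<Rightarrow> 'g \<Rightarrow> 'v \<Rightarrow> 'v::ab_group_add" where
  "Dop br \<rho> \<mu> x y u = \<mu> y x u - \<mu> x y u + \<rho> x (\<rho> y u) - \<rho> y (\<rho> x u) - \<rho> (br x y) u"

text \<open>Representation (V; rho, mu) of the Lie-Yamaguti algebra (g, br, tr);
 gl(V) = linear endomorphisms of V, composition of operators written pointwise.\<close>
definition representation :: "('k::field \<Rightarrow> 'g::ab_group_add \<Rightarrow> 'g) \<Rightarrow> ('g \<Rightarrow> 'g \<Rightarrow> 'g) \<Rightarrow> ('g \<Rightarrow> 'g \<Rightarrow> 'g \<Rightarrow> 'g) \<Rightarrow>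
    ('k \<Rightarrow> 'v::ab_group_add \<Rightarrow> 'v) \<Rightarrow> ('g \<Rightarrow> 'v \<Rightarrow> 'v) \<Rightarrow> ('g \<Rightarrow> 'g \<Rightarrow> 'v \<Rightarrow> 'v) \<Rightarrow> bool" where
  "representation sg br tr sv \<rho> \<mu> \<longleftrightarrow>
     vector_space sv \<and>
     (\<forall>x a u v. \<rho> x (sv a u + v) = sv a (\<rho> x u) + \<rho> x v) \<and>
     (\<forall>x y a u v. \<mu> x y (sv a u + v) = sv a (\<mu> x y u) + \<mu> x y v) \<and>
     (\<forall>a x y u. \<rho> (sg a x + y) u = sv a (\<rho> x u) + \<rho> y u) \<and>
     (\<forall>a x y z u. \<mu> (sg a x + y) z u = sv a (\<mu> x z u) + \<mu> y z u \<and>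
                  \<mu> z (sg a x + y) u = sv a (\<mu> z x u) + \<mu> z y u) \<and>
     (\<forall>x y z u. \<mu> (br x y) z u - \<mu> x z (\<rho> y u) + \<mu> y z (\<rho> x u) = 0) \<and>
     (\<forall>x y z u. \<mu> x (br y z) u - \<rho> y (\<mu> x z u) + \<rho> z (\<mu> x y u) = 0) \<and>
     (\<forall>x y z u. \<rho> (tr x y z) u = Dop br \<rho> \<mu> x y (\<rho> z u) - \<rho> z (Dop br \<rho> \<mu> x y u)) \<and>
     (\<forall>x y z w u. \<mu> z w (\<mu> x y u) - \<mu> y w (\<mu> x z u) - \<mu> x (tr y z w) u
                   + Dop br \<rho> \<mu> y z (\<mu> x w u) = 0) \<and>
     (\<forall>x y z w u. \<mu> (tr x y z) w u + \<mu> z (tr x y w) u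
                   = Dop br \<rho> \<mu> x y (\<mu> z w u) - \<mu> z w (Dop br \<rho> \<mu> x y u))"

definition relative_RB :: "('k::field \<Rightarrow> 'g::ab_group_add \<Rightarrow> 'g) \<Rightarrow> ('g \<Rightarrow> 'g \<Rightarrow> 'g) \<Rightarrow> ('g \<Rightarrow> 'g \<Rightarrow> 'g \<Rightarrow> 'g) \<Rightarrow>
    ('k \<Rightarrow> 'v::ab_group_add \<Rightarrow> 'v) \<Rightarrow> ('g \<Rightarrow> 'v \<Rightarrow> 'v) \<Rightarrow> ('g \<Rightarrow> 'g \<Rightarrow> 'v \<Rightarrow> 'v) \<Rightarrow> ('v \<Rightarrow> 'g) \<Rightarrow> bool" where
  "relative_RB sg br tr sv \<rho> \<mu> T \<longleftrightarrow>
     (\<forall>a u v. T (sv a u + v) = sg a (T u) + T v) \<and>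
     (\<forall>u v. br (T u) (T v) = T (\<rho> (T u) v - \<rho> (T v) u)) \<and>
     (\<forall>u v w. tr (T u) (T v) (T w) =
        T (Dop br \<rho> \<mu> (T u) (T v) w + \<mu> (T v) (T w) u - \<mu> (T u) (T w) v))"

definition commC :: "('a \<Rightarrow> 'a \<Rightarrow> 'a::ab_group_add) \<Rightarrow> 'a \<Rightarrow> 'a \<Rightarrow> 'a" where
  "commC m x y = m x y - m y x"

definition assocr :: "('a \<Rightarrow> 'a \<Rightarrow> 'a::ab_group_add) \<Rightarrow> 'a \<Rightarrow> 'a \<Rightarrow> 'a \<Rightarrow> 'a" where
  "assocr m x y z = m (m x y) z - m x (m y z)"

definition triD :: "('a \<Rightarrow> 'a \<Rightarrow> 'a::ab_group_add) \<Rightarrow> ('a \<Rightarrow> 'a \<Rightarrow> 'a \<Rightarrow> 'a) \<Rightarrow> 'a \<Rightarrow> 'a \<Rightarrow> 'a \<Rightarrow> 'a" where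
  "triD m t x y z = t z y x - t z x y + assocr m y x z - assocr m x y z"

definition preLY_on :: "('k::field \<Rightarrow> 'a::ab_group_add \<Rightarrow> 'a) \<Rightarrow> 'a set \<Rightarrow> ('a \<Rightarrow> 'a \<Rightarrow> 'a) \<Rightarrow> ('a \<Rightarrow> 'a \<Rightarrow> 'a \<Rightarrow> 'a) \<Rightarrow> bool" where
  "preLY_on s S m t \<longleftrightarrow>
     vector_space s \<and> subspace_in s S \<and>
     (\<forall>x\<in>S. \<forall>y\<in>S. m x y \<in> S) \<and> (\<forall>x\<in>S. \<forall>y\<in>S. \<forall>z\<in>S. t x y z \<in> S) \<and>
     bilinear_on s S m \<and> trilinear_on s S t \<and>
     (\<forall>x\<in>S. \<forall>y\<in>S. \<forall>z\<in>S. \<forall>w\<in>S.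
        t z (commC m x y) w - t (m y z) x w + t (m x z) y w = 0) \<and>
     (\<forall>x\<in>S. \<forall>y\<in>S. \<forall>z\<in>S. \<forall>w\<in>S.
        t x y (commC m z w) = m z (t x y w) - m w (t x y z)) \<and>
     (\<forall>x\<in>S. \<forall>y\<in>S. \<forall>z\<in>S. \<forall>w\<in>S. \<forall>u\<in>S.
        t (t x y z) w u - t (t x y w) z u - t x y (triD m t z w u) - t x y (t z w u)
        + t x y (t w z u) + triD m t z w (t x y u) = 0) \<and>
     (\<forall>x\<in>S. \<forall>y\<in>S. \<forall>z\<in>S. \<forall>w\<in>S. \<forall>u\<in>S.
        t z (triD m t x y w) u + t z (t x y w) u - t z (t y x w) u
        + t z w (triD m t x y u) + t z w (t x y u) - t z w (t y x u)
        = triD m t x y (t z w u) - t (triD m t x y z) w u) \<and>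
     (\<forall>x\<in>S. \<forall>y\<in>S. \<forall>z\<in>S. \<forall>w\<in>S.
        m (triD m t x y z) w + m (t x y z) w - m (t y x z) w
        = triD m t x y (m z w) - m z (triD m t x y w))"

end

theory Submission
  imports Defs
begin

(* The two Rota-Baxter identities say that T intertwines the brackets [u,v]_C and [[u,v,w]]_C
   on V with those of g, so T is a homomorphism as soon as V is a Lie-Yamaguti algebra, and then
   T(V) is a subalgebra. The Lie-Yamaguti identities on V are checked by expanding everything with
   the representation axioms; the Jacobi and derivation identities of g enter through rho.
   For the pre-Lie-Yamaguti structure one notes {u,v,w}_D = D(Tu,Tv)w, after which (P1)-(P5)
   on V are exactly the representation axioms. The Rota-Baxter identities also show that
   T(u*v) and T{u,v,w} depend on u, v, w only through Tu, Tv, Tw, so the structure descends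
   along T to T(V). Characteristic 0 is never used. *)

lemma module_hom_iff_scale_add:
  assumes "module s1" "module s2"
  shows "module_hom s1 s2 f \<longleftrightarrow> (\<forall>a x y. f (s1 a x + y) = s2 a (f x) + f y)"
proof
  assume "module_hom s1 s2 f"
  then show "\<forall>a x y. f (s1 a x + y) = s2 a (f x) + f y"
    by (simp add: module_hom.add module_hom.scale)
next
  assume lin: "\<forall>a x y. f (s1 a x + y) = s2 a (f x) + f y"
  have zero: "f 0 = 0"
    using lin[rule_format, of 1 0 0] module.scale_zero_right[OF assms(1)]
      module.scale_one[OF assms(2)] by simp
  show "module_hom s1 s2 f"
    unfolding module_hom_iff
    using assms lin[rule_format, of 1] lin[rule_format, of _ _ 0]
    by (simp add: module.scale_one zero)
qed

lemma subspace_in_range: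
  assumes "module_hom s1 s2 f"
  shows "subspace_in s2 (range f)"
  unfolding subspace_in_def
proof (intro conjI ballI allI)
  show "0 \<in> range f"
    using module_hom.zero[OF assms] by (metis rangeI)
next
  fix X Y assume "X \<in> range f" "Y \<in> range f"
  then obtain x y where "X = f x" "Y = f y" by blast
  then have "X + Y = f (x + y)" by (simp add: module_hom.add[OF assms])
  then show "X + Y \<in> range f" by simp
next
  fix c X assume "X \<in> range f"
  then obtain x where "X = f x" by blast
  then have "s2 c X = f (s1 c x)" by (simp add: module_hom.scale[OF assms])
  then show "s2 c X \<in> range f" by simp
qed

lemma LY_subalgebra_range:
  assumes "module_hom s1 s2 f" and hom: "LY_hom_on s1 s2 UNIV br1 tr1 br2 tr2 f"
  shows "LY_subalgebra s2 br2 tr2 (range f)"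
proof -
  have "br2 (f x) (f y) = f (br1 x y)" "tr2 (f x) (f y) (f z) = f (tr1 x y z)" for x y z
    using hom by (simp_all add: LY_hom_on_def)
  then show ?thesis
    by (auto simp: LY_subalgebra_def subspace_in_range[OF assms(1)])
qed

lemma ex_induced_binop:
  assumes "\<And>x x' y y'. f x = f x' \<Longrightarrow> f y = f y' \<Longrightarrow> f (m x y) = f (m x' y')"
  shows "\<exists>M. \<forall>x y. M (f x) (f y) = f (m x y)"
proof (intro exI allI)
  show "f (m (inv f (f x)) (inv f (f y))) = f (m x y)" for x y
    by (rule assms) (simp_all add: f_inv_into_f)
qed

lemma ex_induced_ternop:
  assumes "\<And>x x' y y' z z'. f x = f x' \<Longrightarrow> f y = f y' \<Longrightarrow> f z = f z'
      \<Longrightarrow> f (t x y z) = f (t x' y' z')"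
  shows "\<exists>N. \<forall>x y z. N (f x) (f y) (f z) = f (t x y z)"
proof (intro exI allI)
  show "f (t (inv f (f x)) (inv f (f y)) (inv f (f z))) = f (t x y z)" for x y z
    by (rule assms) (simp_all add: f_inv_into_f)
qed

lemma preLY_on_range:
  assumes preLY: "preLY_on s1 UNIV m t" and hom: "module_hom s1 s2 f"
    and M: "\<And>x y. M (f x) (f y) = f (m x y)"
    and N: "\<And>x y z. N (f x) (f y) (f z) = f (t x y z)"
  shows "preLY_on s2 (range f) M N"
proof -
  have m_lin: "m (s1 a x + y) z = s1 a (m x z) + m y z" "m z (s1 a x + y) = s1 a (m z x) + m z y"
    and t_lin: "t (s1 a x + y) z w = s1 a (t x z w) + t y z w"
      "t z (s1 a x + y) w = s1 a (t z x w) + t z y w"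
      "t z w (s1 a x + y) = s1 a (t z w x) + t z w y" for a x y z w
    using preLY by (simp_all add: preLY_on_def bilinear_on_def trilinear_on_def)
  have f_lin: "s2 a (f x) + f y = f (s1 a x + y)" for a x y
    by (simp add: module_hom.add[OF hom] module_hom.scale[OF hom])
  have multilinear: "bilinear_on s2 (range f) M" "trilinear_on s2 (range f) N"
    unfolding bilinear_on_def trilinear_on_def by (auto simp: f_lin M N m_lin t_lin)
  have
    "t z (commC m x y) w - t (m y z) x w + t (m x z) y w = 0"
    "t x y (commC m z w) = m z (t x y w) - m w (t x y z)"
    "t (t x y z) w u - t (t x y w) z u - t x y (triD m t z w u) - t x y (t z w u)
      + t x y (t w z u) + triD m t z w (t x y u) = 0"
    "t z (triD m t x y w) u + t z (t x y w) u - t z (t y x w) u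
      + t z w (triD m t x y u) + t z w (t x y u) - t z w (t y x u)
      = triD m t x y (t z w u) - t (triD m t x y z) w u"
    "m (triD m t x y z) w + m (t x y z) w - m (t y x z) w
      = triD m t x y (m z w) - m z (triD m t x y w)" for x y z w u
    using preLY by (simp_all add: preLY_on_def)
  note f_axioms = this[THEN arg_cong[where f = f],
      unfolded module_hom.add[OF hom] module_hom.diff[OF hom] module_hom.zero[OF hom]]
  have f_commC: "commC M (f x) (f y) = f (commC m x y)" for x y
    by (simp add: commC_def M module_hom.diff[OF hom])
  have f_triD: "triD M N (f x) (f y) (f z) = f (triD m t x y z)" for x y z
    by (simp add: triD_def assocr_def M N module_hom.add[OF hom] module_hom.diff[OF hom])
  have "vector_space s2"
    using hom by (simp add: module_hom_iff module_iff_vector_space)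
  with multilinear show ?thesis
    unfolding preLY_on_def
    by (auto simp: subspace_in_range[OF hom] M N f_commC f_triD f_axioms)
qed

locale LY_relative_RB =
  fixes sg :: "'k::field \<Rightarrow> 'g::ab_group_add \<Rightarrow> 'g"
    and br :: "'g \<Rightarrow> 'g \<Rightarrow> 'g" and tr :: "'g \<Rightarrow> 'g \<Rightarrow> 'g \<Rightarrow> 'g"
    and sv :: "'k \<Rightarrow> 'v::ab_group_add \<Rightarrow> 'v"
    and \<rho> :: "'g \<Rightarrow> 'v \<Rightarrow> 'v" and \<mu> :: "'g \<Rightarrow> 'g \<Rightarrow> 'v \<Rightarrow> 'v" and T :: "'v \<Rightarrow> 'g"
  assumes LY: "LY_on sg UNIV br tr"
    and rep: "representation sg br tr sv \<rho> \<mu>"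
    and RB: "relative_RB sg br tr sv \<rho> \<mu> T"
begin

abbreviation D :: "'g \<Rightarrow> 'g \<Rightarrow> 'v \<Rightarrow> 'v" where "D \<equiv> Dop br \<rho> \<mu>"

lemma vector_space_g: "vector_space sg"
  using LY unfolding LY_on_def by blast

lemma vector_space_V: "vector_space sv"
  using rep unfolding representation_def by blast

lemma module_g: "module sg" and module_V: "module sv"
  using vector_space_g vector_space_V by (simp_all add: module_iff_vector_space)

lemma module_hom_T: "module_hom sv sg T"
  using RB module_V module_g by (simp add: module_hom_iff_scale_add relative_RB_def)

lemma module_hom_rho: "module_hom sv sv (\<rho> x)"
  using rep module_V by (simp add: module_hom_iff_scale_add representation_def)

lemma module_hom_rho_left: "module_hom sg sv (\<lambda>x. \<rho> x u)"
  using rep module_V module_g by (simp add: module_hom_iff_scale_add representation_def)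

lemma module_hom_mu: "module_hom sv sv (\<mu> x y)"
  using rep module_V by (simp add: module_hom_iff_scale_add representation_def)

lemma module_hom_mu_left: "module_hom sg sv (\<lambda>x. \<mu> x y u)"
  using rep module_V module_g by (simp add: module_hom_iff_scale_add representation_def)

lemma module_hom_mu_middle: "module_hom sg sv (\<lambda>y. \<mu> x y u)"
  using rep module_V module_g by (simp add: module_hom_iff_scale_add representation_def)

lemma bilinear_br: "bilinear_on sg UNIV br"
  using LY unfolding LY_on_def by (elim conjE)

lemma br_skew: "br x y = - br y x"
  using LY unfolding LY_on_def by (elim conjE) blast

lemma module_hom_br_left: "module_hom sg sg (\<lambda>x. br x y)"
  using bilinear_br module_g by (simp add: module_hom_iff_scale_add bilinear_on_def)

lemma module_hom_br_right: "module_hom sg sg (br x)"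
  using bilinear_br module_g by (simp add: module_hom_iff_scale_add bilinear_on_def)

lemmas module_homs = module_hom_T module_hom_rho module_hom_rho_left module_hom_mu
  module_hom_mu_left module_hom_mu_middle module_hom_br_left module_hom_br_right

lemmas linear_simps = module_homs[THEN module_hom.zero] module_homs[THEN module_hom.add]
  module_homs[THEN module_hom.diff] module_homs[THEN module_hom.neg]
  module_homs[THEN module_hom.scale]

lemma mu_br_left: "\<mu> (br x y) z u = \<mu> x z (\<rho> y u) - \<mu> y z (\<rho> x u)"
proof -
  have "\<mu> (br x y) z u - \<mu> x z (\<rho> y u) + \<mu> y z (\<rho> x u) = 0"
    using rep by (simp add: representation_def)
  then show ?thesis by (simp add: algebra_simps)
qed

lemma mu_br_right: "\<mu> x (br y z) u = \<rho> y (\<mu> x z u) - \<rho> z (\<mu> x y u)"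
proof -
  have "\<mu> x (br y z) u - \<rho> y (\<mu> x z u) + \<rho> z (\<mu> x y u) = 0"
    using rep by (simp add: representation_def)
  then show ?thesis by (simp add: algebra_simps)
qed

lemma rho_tr: "\<rho> (tr x y z) u = D x y (\<rho> z u) - \<rho> z (D x y u)"
  using rep by (simp add: representation_def)

lemma mu_tr_right: "\<mu> x (tr y z w) u = \<mu> z w (\<mu> x y u) - \<mu> y w (\<mu> x z u) + D y z (\<mu> x w u)"
proof -
  have "\<mu> z w (\<mu> x y u) - \<mu> y w (\<mu> x z u) - \<mu> x (tr y z w) u + D y z (\<mu> x w u) = 0"
    using rep by (simp add: representation_def)
  then show ?thesis by (simp add: algebra_simps)
qed

lemma mu_tr_left: "\<mu> (tr x y z) w u = D x y (\<mu> z w u) - \<mu> z w (D x y u) - \<mu> z (tr x y w) u"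
proof -
  have "\<mu> (tr x y z) w u + \<mu> z (tr x y w) u = D x y (\<mu> z w u) - \<mu> z w (D x y u)"
    using rep by (simp add: representation_def)
  then show ?thesis by (simp add: algebra_simps)
qed

lemma LY_jacobi: "br (br x y) z + br (br y z) x + br (br z x) y + tr x y z + tr y z x + tr z x y = 0"
  using LY unfolding LY_on_def by (elim conjE) blast

lemma tr_derivation_br: "tr x y (br z w) = br (tr x y z) w + br z (tr x y w)"
  using LY unfolding LY_on_def by (elim conjE) (metis UNIV_I)

lemma T_br: "br (T u) (T v) = T (\<rho> (T u) v - \<rho> (T v) u)"
  using RB by (simp add: relative_RB_def)

lemma T_tr: "tr (T u) (T v) (T w) = T (D (T u) (T v) w + \<mu> (T v) (T w) u - \<mu> (T u) (T w) v)"
  using RB by (simp add: relative_RB_def)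

lemmas rep_simps = Dop_def mu_br_left mu_br_right rho_tr mu_tr_right mu_tr_left linear_simps

definition rb_br :: "'v \<Rightarrow> 'v \<Rightarrow> 'v" where
  "rb_br u v = \<rho> (T u) v - \<rho> (T v) u"

definition rb_tr :: "'v \<Rightarrow> 'v \<Rightarrow> 'v \<Rightarrow> 'v" where
  "rb_tr u v w = D (T u) (T v) w + \<mu> (T v) (T w) u - \<mu> (T u) (T w) v"

lemma T_rb_br: "T (rb_br u v) = br (T u) (T v)"
  unfolding rb_br_def by (simp add: T_br)

lemma T_rb_tr: "T (rb_tr u v w) = tr (T u) (T v) (T w)"
  unfolding rb_tr_def by (simp add: T_tr)

lemma rb_tr_skew: "rb_tr x y z = - rb_tr y x z"
  unfolding rb_tr_def using br_skew[of "T y" "T x"]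
  by (simp add: Dop_def linear_simps algebra_simps)

lemma rb_jacobi: "rb_br (rb_br x y) z + rb_br (rb_br y z) x + rb_br (rb_br z x) y
    + rb_tr x y z + rb_tr y z x + rb_tr z x y = 0"
proof -
  have unfold: "rb_br (rb_br p q) r = \<rho> (br (T p) (T q)) r - \<rho> (T r) (rb_br p q)" for p q r
    by (simp only: rb_br_def[of "rb_br p q" r] T_rb_br)
  show ?thesis unfolding unfold by (simp add: rep_simps rb_br_def rb_tr_def algebra_simps)
qed

lemma rb_tr_br_cyclic:
  "rb_tr (rb_br x y) z w + rb_tr (rb_br y z) x w + rb_tr (rb_br z x) y w = 0" (is "?lhs = 0")
proof -
  have unfold: "rb_tr (rb_br p q) r w = D (br (T p) (T q)) (T r) w + \<mu> (T r) (T w) (rb_br p q)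
      - \<mu> (br (T p) (T q)) (T w) r" for p q r
    by (simp only: rb_tr_def[of "rb_br p q" r w] T_rb_br)
  have jacobi: "\<rho> (br (br (T x) (T y)) (T z)) w + \<rho> (br (br (T y) (T z)) (T x)) w
      + \<rho> (br (br (T z) (T x)) (T y)) w + \<rho> (tr (T x) (T y) (T z)) w
      + \<rho> (tr (T y) (T z) (T x)) w + \<rho> (tr (T z) (T x) (T y)) w = 0" (is "?J = 0")
    using arg_cong[OF LY_jacobi, of "\<lambda>g. \<rho> g w"] by (simp only: linear_simps)
  have "?lhs + ?J = 0"
    unfolding unfold by (simp add: rep_simps rb_br_def algebra_simps)
  with jacobi show ?thesis by simp
qed

lemma rb_tr_derivation_br:
  "rb_tr x y (rb_br z w) = rb_br (rb_tr x y z) w + rb_br z (rb_tr x y w)"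
proof -
  have unfold_tr: "rb_tr x y (rb_br z w) = D (T x) (T y) (rb_br z w)
      + \<mu> (T y) (br (T z) (T w)) x - \<mu> (T x) (br (T z) (T w)) y"
    by (simp only: rb_tr_def[of x y "rb_br z w"] T_rb_br)
  have unfold_br: "rb_br (rb_tr x y z) w = \<rho> (tr (T x) (T y) (T z)) w - \<rho> (T w) (rb_tr x y z)"
    "rb_br z (rb_tr x y w) = \<rho> (T z) (rb_tr x y w) - \<rho> (tr (T x) (T y) (T w)) z"
    by (simp_all only: rb_br_def T_rb_tr)
  show ?thesis
    unfolding unfold_tr unfold_br by (simp add: rep_simps rb_br_def rb_tr_def algebra_simps)
qed

lemma rb_tr_derivation_tr:
  "rb_tr x y (rb_tr z w t) = rb_tr (rb_tr x y z) w t + rb_tr z (rb_tr x y w) t + rb_tr z w (rb_tr x y t)" (is "?lhs = ?rhs")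
proof -
  have unfold: "rb_tr x y (rb_tr z w t) = D (T x) (T y) (rb_tr z w t)
      + \<mu> (T y) (tr (T z) (T w) (T t)) x - \<mu> (T x) (tr (T z) (T w) (T t)) y"
    "rb_tr (rb_tr x y z) w t = D (tr (T x) (T y) (T z)) (T w) t + \<mu> (T w) (T t) (rb_tr x y z)
      - \<mu> (tr (T x) (T y) (T z)) (T t) w"
    "rb_tr z (rb_tr x y w) t = D (T z) (tr (T x) (T y) (T w)) t + \<mu> (tr (T x) (T y) (T w)) (T t) z
      - \<mu> (T z) (T t) (rb_tr x y w)"
    "rb_tr z w (rb_tr x y t) = D (T z) (T w) (rb_tr x y t) + \<mu> (T w) (tr (T x) (T y) (T t)) z
      - \<mu> (T z) (tr (T x) (T y) (T t)) w"
    by (simp_all only: rb_tr_def[of x y "rb_tr z w t"] rb_tr_def[of "rb_tr x y z" w t]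
        rb_tr_def[of z "rb_tr x y w" t] rb_tr_def[of z w "rb_tr x y t"] T_rb_tr)
  have derivation: "\<rho> (tr (T x) (T y) (br (T z) (T w))) t - \<rho> (br (tr (T x) (T y) (T z)) (T w)) t
      - \<rho> (br (T z) (tr (T x) (T y) (T w))) t = 0" (is "?J = 0")
    using arg_cong[OF tr_derivation_br, of "\<lambda>g. \<rho> g t"] by (simp add: linear_simps)
  have "?lhs - ?rhs + ?J = 0"
    unfolding unfold by (simp add: rep_simps rb_tr_def algebra_simps)
  with derivation show ?thesis by simp
qed

lemma bilinear_rb_br: "bilinear_on sv UNIV rb_br"
  unfolding bilinear_on_def rb_br_def
  by (simp add: linear_simps module.scale_right_diff_distrib[OF module_V])

lemma trilinear_rb_tr: "trilinear_on sv UNIV rb_tr"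
  unfolding trilinear_on_def rb_tr_def
  by (simp add: Dop_def linear_simps module.scale_right_distrib[OF module_V]
      module.scale_right_diff_distrib[OF module_V] algebra_simps)

theorem LY_on_rb: "LY_on sv UNIV rb_br rb_tr"
  unfolding LY_on_def
  by (intro conjI ballI vector_space_V bilinear_rb_br trilinear_rb_tr rb_tr_skew rb_jacobi
      rb_tr_br_cyclic rb_tr_derivation_br rb_tr_derivation_tr UNIV_I)
    (simp_all add: subspace_in_def rb_br_def)

theorem LY_hom_on_T: "LY_hom_on sv sg UNIV rb_br rb_tr br tr T"
  unfolding LY_hom_on_def by (simp add: linear_simps T_rb_br T_rb_tr)

definition rb_mult :: "'v \<Rightarrow> 'v \<Rightarrow> 'v" where
  "rb_mult u v = \<rho> (T u) v"

definition rb_tri :: "'v \<Rightarrow> 'v \<Rightarrow> 'v \<Rightarrow> 'v" where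
  "rb_tri u v w = \<mu> (T v) (T w) u"

lemma commC_rb_mult: "commC rb_mult u v = rb_br u v"
  by (simp add: commC_def rb_mult_def rb_br_def)

lemma triD_rb: "triD rb_mult rb_tri x y z = D (T x) (T y) z"
  unfolding triD_def assocr_def rb_mult_def rb_tri_def
  by (simp add: Dop_def T_br linear_simps algebra_simps)

lemma rb_subadjacent: "triD rb_mult rb_tri x y z + rb_tri x y z - rb_tri y x z = rb_tr x y z"
  by (simp add: triD_rb rb_tri_def rb_tr_def)

lemma rb_preLY_P1:
  "rb_tri z (commC rb_mult x y) w - rb_tri (rb_mult y z) x w + rb_tri (rb_mult x z) y w = 0"
  by (simp add: commC_rb_mult rb_tri_def rb_mult_def T_rb_br mu_br_left)

lemma rb_preLY_P2:
  "rb_tri x y (commC rb_mult z w) = rb_mult z (rb_tri x y w) - rb_mult w (rb_tri x y z)"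
  by (simp add: commC_rb_mult rb_tri_def rb_mult_def T_rb_br mu_br_right)

lemma rb_preLY_P3: "rb_tri (rb_tri x y z) w u - rb_tri (rb_tri x y w) z u
    - rb_tri x y (triD rb_mult rb_tri z w u) - rb_tri x y (rb_tri z w u) + rb_tri x y (rb_tri w z u)
    + triD rb_mult rb_tri z w (rb_tri x y u) = 0" (is "?A - ?B - ?C1 - ?C2 + ?C3 + ?E = 0")
proof -
  have "?C1 + ?C2 - ?C3 = rb_tri x y (rb_tr z w u)"
    by (simp add: rb_tri_def linear_simps flip: rb_subadjacent)
  also have "\<dots> = ?A - ?B + ?E"
    by (simp add: rb_tri_def T_rb_tr mu_tr_right triD_rb)
  finally show ?thesis by (simp add: algebra_simps)
qed

lemma rb_preLY_P4: "rb_tri z (triD rb_mult rb_tri x y w) u + rb_tri z (rb_tri x y w) u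
    - rb_tri z (rb_tri y x w) u + rb_tri z w (triD rb_mult rb_tri x y u) + rb_tri z w (rb_tri x y u)
    - rb_tri z w (rb_tri y x u)
    = triD rb_mult rb_tri x y (rb_tri z w u) - rb_tri (triD rb_mult rb_tri x y z) w u"
  (is "?A1 + ?A2 - ?A3 + ?B1 + ?B2 - ?B3 = ?rhs")
proof -
  have "?A1 + ?A2 - ?A3 + ?B1 + ?B2 - ?B3 = (?A1 + ?A2 - ?A3) + (?B1 + ?B2 - ?B3)"
    by (simp add: algebra_simps)
  also have "\<dots> = rb_tri z (rb_tr x y w) u + rb_tri z w (rb_tr x y u)"
    by (simp add: rb_tri_def linear_simps flip: rb_subadjacent)
  also have "\<dots> = ?rhs"
    by (simp add: rb_tri_def T_rb_tr mu_tr_left triD_rb)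
  finally show ?thesis .
qed

lemma rb_preLY_P5: "rb_mult (triD rb_mult rb_tri x y z) w + rb_mult (rb_tri x y z) w
    - rb_mult (rb_tri y x z) w
    = triD rb_mult rb_tri x y (rb_mult z w) - rb_mult z (triD rb_mult rb_tri x y w)"
proof -
  have "rb_mult (triD rb_mult rb_tri x y z) w + rb_mult (rb_tri x y z) w - rb_mult (rb_tri y x z) w
      = rb_mult (rb_tr x y z) w"
    by (simp add: rb_mult_def linear_simps flip: rb_subadjacent)
  also have "\<dots> = triD rb_mult rb_tri x y (rb_mult z w) - rb_mult z (triD rb_mult rb_tri x y w)"
    by (simp add: rb_mult_def T_rb_tr rho_tr triD_rb)
  finally show ?thesis .
qed

theorem preLY_on_rb: "preLY_on sv UNIV rb_mult rb_tri"
proof -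
  have "bilinear_on sv UNIV rb_mult" "trilinear_on sv UNIV rb_tri"
    unfolding bilinear_on_def trilinear_on_def rb_mult_def rb_tri_def
    by (simp_all add: linear_simps)
  then show ?thesis
    unfolding preLY_on_def
    using vector_space_V rb_preLY_P1 rb_preLY_P2 rb_preLY_P3 rb_preLY_P4 rb_preLY_P5
    by (simp add: subspace_in_def)
qed

(* By the Rota-Baxter identities, T(rho(Tx)y) = [Tx,Ty] + T(rho(Ty)x), and T(mu(Ty,Tz)x) is
   [[Tx,Ty,Tz]] minus terms that depend on x only through Tx. *)
lemma T_rb_mult_cong:
  "T x = T x' \<Longrightarrow> T y = T y' \<Longrightarrow> T (rb_mult x y) = T (rb_mult x' y')"
  using T_br[of x y] T_br[of x y'] by (simp add: rb_mult_def linear_simps)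

lemma T_rb_tri_cong:
  "T x = T x' \<Longrightarrow> T y = T y' \<Longrightarrow> T z = T z' \<Longrightarrow> T (rb_tri x y z) = T (rb_tri x' y' z')"
  using T_tr[of x y z] T_tr[of x' y z] by (simp add: rb_tri_def linear_simps)

end

theorem corollary3p14:
  fixes sg :: "'k::field_char_0 \<Rightarrow> 'g::ab_group_add \<Rightarrow> 'g"
    and br :: "'g \<Rightarrow> 'g \<Rightarrow> 'g" and tr :: "'g \<Rightarrow> 'g \<Rightarrow> 'g \<Rightarrow> 'g"
    and sv :: "'k \<Rightarrow> 'v::ab_group_add \<Rightarrow> 'v"
    and \<rho> :: "'g \<Rightarrow> 'v \<Rightarrow> 'v" and \<mu> :: "'g \<Rightarrow> 'g \<Rightarrow> 'v \<Rightarrow> 'v" and T :: "'v \<Rightarrow> 'g"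
  assumes LY: "LY_on sg UNIV br tr"
    and rep: "representation sg br tr sv \<rho> \<mu>"
    and RB: "relative_RB sg br tr sv \<rho> \<mu> T"
  defines "mult \<equiv> (\<lambda>u v. \<rho> (T u) v)"
    and "tri \<equiv> (\<lambda>u v w. \<mu> (T v) (T w) u)"
    and "brC \<equiv> (\<lambda>u v. \<rho> (T u) v - \<rho> (T v) u)"
    and "trC \<equiv> (\<lambda>u v w. Dop br \<rho> \<mu> (T u) (T v) w + \<mu> (T v) (T w) u - \<mu> (T u) (T w) v)"
  shows "LY_on sv UNIV brC trC
       \<and> LY_hom_on sv sg UNIV brC trC br tr T
       \<and> LY_subalgebra sg br tr (range T)
       \<and> (\<exists>m t. (\<forall>u v. m (T u) (T v) = T (mult u v))
              \<and> (\<forall>u v w. t (T u) (T v) (T w) = T (tri u v w))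
              \<and> preLY_on sg (range T) m t)"
proof -
  interpret LY_relative_RB sg br tr sv \<rho> \<mu> T
    using LY rep RB by (rule LY_relative_RB.intro)
  have ops: "mult = rb_mult" "tri = rb_tri" "brC = rb_br" "trC = rb_tr"
    unfolding mult_def tri_def brC_def trC_def
    by (simp_all add: fun_eq_iff rb_mult_def rb_tri_def rb_br_def rb_tr_def)
  obtain M where M: "\<And>x y. M (T x) (T y) = T (rb_mult x y)"
    using ex_induced_binop[of T rb_mult] T_rb_mult_cong by blast
  obtain N where N: "\<And>x y z. N (T x) (T y) (T z) = T (rb_tri x y z)"
    using ex_induced_ternop[of T rb_tri] T_rb_tri_cong by blast
  have "preLY_on sg (range T) M N"
    using preLY_on_rb module_hom_T M N by (rule preLY_on_range)
  then show ?thesis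
    unfolding ops
    by (intro conjI exI[of _ M] exI[of _ N] allI LY_on_rb LY_hom_on_T M N
        LY_subalgebra_range[OF module_hom_T LY_hom_on_T])
qed

end
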